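(* Let $n\ge 2$, let $\mathcal{S}\subseteq(\mathbb{C}^d)^{\otimes n}$ be the permutation-symmetric subspace, let $|\psi\rangle\in\mathcal{S}$ and let $X$ be a $d\times d$ complex matrix with $X_{(1)}|\psi\rangle\in\mathcal{S}$. Then $X^p_{(1)}|\psi\rangle\in\mathcal{S}$ for every natural number $p\ge 0$; if moreover $X$ is invertible, this holds for every integer $p$.
   Context: $\mathcal{S}$ is the set of vectors in $(\mathbb{C}^d)^{\otimes n}$ invariant under all permutations of the $n$ tensor factors. For a $d\times d$ matrix $X$, $X^p_{(1)}$ denotes the operator $X^p\otimes\mathbb{I}\otimes\cdots\otimes\mathbb{I}$ on $(\mathbb{C}^d)^{\otimes n}$. *)

theory Defs
  imports "HOL-Analysis.Analysis"
begin

text \<open>A vector of the tensor power (C^d)^{otimes n} is represented by its coordinate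
  function on multi-indices, i.e. lists of length n over the finite index type 'd;
  coordinates at lists of other lengths are required to vanish.\<close>

definition tensor_space :: "nat \<Rightarrow> ('d::finite list \<Rightarrow> complex) set" where
  "tensor_space n = {\<psi>. \<forall>xs. length xs \<noteq> n \<longrightarrow> \<psi> xs = 0}"

definition sym_subspace :: "nat \<Rightarrow> ('d::finite list \<Rightarrow> complex) set" where
  "sym_subspace n = {\<psi> \<in> tensor_space n.
     \<forall>\<sigma>. \<sigma> permutes {..<n} \<longrightarrow>
       (\<forall>xs. length xs = n \<longrightarrow> \<psi> (map (\<lambda>k. xs ! \<sigma> k) [0..<n]) = \<psi> xs)}"

definition op_first :: "complex^'d^'d \<Rightarrow> ('d::finite list \<Rightarrow> complex) \<Rightarrow> ('d list \<Rightarrow> complex)" where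
  "op_first X \<psi> xs = (case xs of [] \<Rightarrow> 0 | i # is \<Rightarrow> (\<Sum>j\<in>UNIV. X $ i $ j * \<psi> (j # is)))"

primrec mat_pow :: "complex^'d^'d \<Rightarrow> nat \<Rightarrow> complex^'d^'d" where
  "mat_pow X 0 = mat 1"
| "mat_pow X (Suc p) = X ** mat_pow X p"

definition mat_ipow :: "complex^'d^'d \<Rightarrow> int \<Rightarrow> complex^'d^'d" where
  "mat_ipow X p = (if 0 \<le> p then mat_pow X (nat p) else mat_pow (matrix_inv X) (nat (- p)))"

end

theory Submission
  imports Defs
begin

text \<open>Write X_k for X acting on the k-th tensor factor.  For a symmetric vector \<psi>, the vector
  X_1 \<psi> is symmetric exactly when X_k \<psi> = X_1 \<psi> for all k.  Since operators on different
  factors commute, this passes from X to its powers: X_k^p \<psi> = X_k^(p-1) X_1 \<psi> =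
  X_1 X_k^(p-1) \<psi> = X_1^p \<psi> by induction.  For the inverse,
  X_k^-1 \<psi> = X_k^-1 X_1^-1 X_k \<psi> = X_1^-1 \<psi>, so negative powers follow as well.\<close>

definition factor_op :: "nat \<Rightarrow> complex^'d^'d \<Rightarrow> ('d::finite list \<Rightarrow> complex) \<Rightarrow> 'd list \<Rightarrow> complex" where
  "factor_op k Y f xs = (if k < length xs then (\<Sum>j\<in>UNIV. Y $ (xs ! k) $ j * f (xs[k := j])) else 0)"

definition permute_coords :: "nat \<Rightarrow> (nat \<Rightarrow> nat) \<Rightarrow> ('d list \<Rightarrow> complex) \<Rightarrow> 'd list \<Rightarrow> complex" where
  "permute_coords n \<sigma> f xs = (if length xs = n then f (map (\<lambda>m. xs ! \<sigma> m) [0..<n]) else f xs)"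

definition factor_uniform :: "nat \<Rightarrow> complex^'d^'d \<Rightarrow> ('d::finite list \<Rightarrow> complex) \<Rightarrow> bool" where
  "factor_uniform n Y f \<longleftrightarrow> (\<forall>k<n. factor_op k Y f = factor_op 0 Y f)"

lemma factor_uniformD: "factor_uniform n Y f \<Longrightarrow> k < n \<Longrightarrow> factor_op k Y f = factor_op 0 Y f"
  unfolding factor_uniform_def by blast

lemma op_first_eq_factor_op: "op_first Y f = factor_op 0 Y f"
  by (rule ext, case_tac x) (simp_all add: factor_op_def op_first_def)

lemma factor_op_in_tensor_space: "f \<in> tensor_space n \<Longrightarrow> factor_op k Y f \<in> tensor_space n"
  by (simp add: tensor_space_def factor_op_def)

lemma factor_op_mat_1:
  assumes "f \<in> tensor_space n" and "k < n"
  shows "factor_op k (mat 1) f = f"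
proof
  fix xs
  show "factor_op k (mat 1) f xs = f xs"
  proof (cases "length xs = n")
    case True
    have "(\<Sum>j\<in>UNIV. (mat 1 :: complex^'a^'a) $ (xs ! k) $ j * f (xs[k := j]))
        = (\<Sum>j\<in>UNIV. if j = xs ! k then f (xs[k := j]) else 0)"
      by (rule sum.cong) (auto simp: mat_def)
    then show ?thesis
      using True assms(2) by (simp add: factor_op_def)
  next
    case False
    then show ?thesis
      using assms(1) by (simp add: factor_op_def tensor_space_def)
  qed
qed

lemma factor_op_matrix_mult: "factor_op k (A ** B) f = factor_op k A (factor_op k B f)"
proof
  fix xs
  show "factor_op k (A ** B) f xs = factor_op k A (factor_op k B f) xs"
  proof (cases "k < length xs")
    case True
    have "(\<Sum>m\<in>UNIV. (A ** B) $ (xs ! k) $ m * f (xs[k := m]))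
        = (\<Sum>m\<in>UNIV. \<Sum>j\<in>UNIV. A $ (xs ! k) $ j * B $ j $ m * f (xs[k := m]))"
      by (simp add: matrix_matrix_mult_def sum_distrib_right)
    also have "\<dots> = (\<Sum>j\<in>UNIV. \<Sum>m\<in>UNIV. A $ (xs ! k) $ j * B $ j $ m * f (xs[k := m]))"
      by (rule sum.swap)
    also have "\<dots> = (\<Sum>j\<in>UNIV. A $ (xs ! k) $ j * (\<Sum>m\<in>UNIV. B $ j $ m * f (xs[k := m])))"
      by (simp add: sum_distrib_left mult.assoc)
    finally show ?thesis
      using True by (simp add: factor_op_def)
  qed (simp add: factor_op_def)
qed

lemma factor_op_commute:
  assumes "k \<noteq> l"
  shows "factor_op k A (factor_op l B f) = factor_op l B (factor_op k A f)"
proof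
  fix xs
  show "factor_op k A (factor_op l B f) xs = factor_op l B (factor_op k A f) xs"
  proof (cases "k < length xs \<and> l < length xs")
    case True
    have "(\<Sum>j\<in>UNIV. A $ (xs ! k) $ j * (\<Sum>m\<in>UNIV. B $ (xs ! l) $ m * f (xs[k := j, l := m])))
        = (\<Sum>j\<in>UNIV. \<Sum>m\<in>UNIV. A $ (xs ! k) $ j * B $ (xs ! l) $ m * f (xs[k := j, l := m]))"
      by (simp add: sum_distrib_left mult.assoc)
    also have "\<dots> = (\<Sum>m\<in>UNIV. \<Sum>j\<in>UNIV. A $ (xs ! k) $ j * B $ (xs ! l) $ m * f (xs[k := j, l := m]))"
      by (rule sum.swap)
    also have "\<dots> = (\<Sum>m\<in>UNIV. B $ (xs ! l) $ m * (\<Sum>j\<in>UNIV. A $ (xs ! k) $ j * f (xs[l := m, k := j])))"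
      using assms by (simp add: sum_distrib_left list_update_swap mult.commute mult.left_commute)
    finally show ?thesis
      using True assms by (simp add: factor_op_def)
  qed (auto simp: factor_op_def)
qed

lemma factor_op_mat_pow:
  assumes "f \<in> tensor_space n" and "k < n"
  shows "factor_op k (mat_pow Y p) f = (factor_op k Y ^^ p) f"
  by (induction p) (simp_all add: factor_op_mat_1[OF assms] factor_op_matrix_mult)

lemma factor_op_permute_coords:
  assumes \<sigma>: "\<sigma> permutes {..<n}" and "k < n" and "length xs = n"
  shows "factor_op k Y f (map (\<lambda>m. xs ! \<sigma> m) [0..<n]) = factor_op (\<sigma> k) Y (permute_coords n \<sigma> f) xs"
proof -
  have \<sigma>_lt: "\<sigma> m < n" if "m < n" for m
    using \<sigma> that permutes_in_image by fastforce
  have update: "(map (\<lambda>m. xs ! \<sigma> m) [0..<n])[k := j] = map (\<lambda>m. xs[\<sigma> k := j] ! \<sigma> m) [0..<n]" for j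
  proof (rule nth_equalityI)
    fix m
    assume "m < length ((map (\<lambda>m. xs ! \<sigma> m) [0..<n])[k := j])"
    then have "m < n" by simp
    moreover have "\<sigma> m = \<sigma> k \<longleftrightarrow> m = k"
      using permutes_inj[OF \<sigma>] by (auto dest: injD)
    ultimately show "(map (\<lambda>m. xs ! \<sigma> m) [0..<n])[k := j] ! m = map (\<lambda>m. xs[\<sigma> k := j] ! \<sigma> m) [0..<n] ! m"
      using \<sigma>_lt assms(3) by (auto simp: nth_list_update)
  qed simp
  show ?thesis
    using assms \<sigma>_lt by (simp add: factor_op_def permute_coords_def update)
qed

lemma sym_subspace_iff_permute_coords:
  "f \<in> sym_subspace n \<longleftrightarrow> f \<in> tensor_space n \<and> (\<forall>\<sigma>. \<sigma> permutes {..<n} \<longrightarrow> permute_coords n \<sigma> f = f)"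
  by (auto simp: sym_subspace_def permute_coords_def fun_eq_iff)

lemma sym_subspace_permute_coords: "f \<in> sym_subspace n \<Longrightarrow> \<sigma> permutes {..<n} \<Longrightarrow> permute_coords n \<sigma> f = f"
  by (simp add: sym_subspace_iff_permute_coords)

lemma sym_subspace_in_tensor_space: "f \<in> sym_subspace n \<Longrightarrow> f \<in> tensor_space n"
  by (simp add: sym_subspace_iff_permute_coords)

lemma factor_op_permute_sym:
  assumes f: "f \<in> sym_subspace n" and \<sigma>: "\<sigma> permutes {..<n}" and "0 < n"
  shows "permute_coords n \<sigma> (factor_op 0 Y f) = factor_op (\<sigma> 0) Y f"
proof
  fix xs
  show "permute_coords n \<sigma> (factor_op 0 Y f) xs = factor_op (\<sigma> 0) Y f xs"
  proof (cases "length xs = n")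
    case True
    then show ?thesis
      using factor_op_permute_coords[OF \<sigma> \<open>0 < n\<close> True]
      by (simp add: permute_coords_def sym_subspace_permute_coords[OF f \<sigma>])
  next
    case False
    then show ?thesis
      using factor_op_in_tensor_space[OF sym_subspace_in_tensor_space[OF f]]
      by (simp add: permute_coords_def tensor_space_def)
  qed
qed

lemma factor_op_in_sym_subspace_iff:
  assumes f: "f \<in> sym_subspace n" and "0 < n"
  shows "factor_op 0 Y f \<in> sym_subspace n \<longleftrightarrow> factor_uniform n Y f"
proof
  assume sym: "factor_op 0 Y f \<in> sym_subspace n"
  show "factor_uniform n Y f"
    unfolding factor_uniform_def
  proof (intro allI impI)
    fix k assume "k < n"
    then have \<tau>: "Transposition.transpose 0 k permutes {..<n}"
      using \<open>0 < n\<close> by (intro permutes_swap_id) auto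
    have "factor_op (Transposition.transpose 0 k 0) Y f = factor_op 0 Y f"
      using factor_op_permute_sym[OF f \<tau> \<open>0 < n\<close>, where Y = Y] sym_subspace_permute_coords[OF sym \<tau>]
      by (metis)
    then show "factor_op k Y f = factor_op 0 Y f"
      by simp
  qed
next
  assume uniform: "factor_uniform n Y f"
  have "permute_coords n \<sigma> (factor_op 0 Y f) = factor_op 0 Y f" if \<sigma>: "\<sigma> permutes {..<n}" for \<sigma>
  proof -
    have "\<sigma> 0 < n"
      using permutes_in_image[OF \<sigma>] \<open>0 < n\<close> by simp
    then show ?thesis
      using factor_op_permute_sym[OF f \<sigma> \<open>0 < n\<close>] factor_uniformD[OF uniform] by metis
  qed
  then show "factor_op 0 Y f \<in> sym_subspace n"
    unfolding sym_subspace_iff_permute_coords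
    using factor_op_in_tensor_space[OF sym_subspace_in_tensor_space[OF f]] by blast
qed

lemma funpow_eq_if_commute:
  assumes "F x = G x" and commute: "\<And>y. F (G y) = G (F y)"
  shows "(F ^^ p) x = (G ^^ p) x"
proof (induction p)
  case (Suc p)
  have F_G_pow: "F ((G ^^ q) y) = (G ^^ q) (F y)" for q y
    by (induction q) (simp_all add: commute)
  have "(F ^^ Suc p) x = F ((G ^^ p) x)"
    using Suc by simp
  also have "\<dots> = (G ^^ p) (G x)"
    using F_G_pow assms(1) by simp
  also have "\<dots> = (G ^^ Suc p) x"
    by (simp add: funpow_swap1)
  finally show ?case .
qed simp

lemma factor_uniform_mat_pow:
  assumes "f \<in> tensor_space n" and "0 < n" and "factor_uniform n Y f"
  shows "factor_uniform n (mat_pow Y p) f"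
  unfolding factor_uniform_def
proof (intro allI impI)
  fix k assume "k < n"
  have "(factor_op k Y ^^ p) f = (factor_op 0 Y ^^ p) f"
  proof (cases "k = 0")
    case False
    then show ?thesis
      using factor_uniformD[OF assms(3) \<open>k < n\<close>] by (intro funpow_eq_if_commute) (auto simp: factor_op_commute)
  qed simp
  then show "factor_op k (mat_pow Y p) f = factor_op 0 (mat_pow Y p) f"
    using factor_op_mat_pow[OF assms(1)] \<open>k < n\<close> \<open>0 < n\<close> by simp
qed

lemma factor_uniform_left_inverse:
  assumes f: "f \<in> tensor_space n" and "0 < n" and ZX: "Z ** X = mat 1" and "factor_uniform n X f"
  shows "factor_uniform n Z f"
  unfolding factor_uniform_def
proof (intro allI impI)
  fix k assume "k < n"
  have identity: "factor_op l Z (factor_op l X f) = f" if "l < n" for l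
    using factor_op_mat_1[OF f that] ZX by (simp add: factor_op_matrix_mult[symmetric])
  show "factor_op k Z f = factor_op 0 Z f"
  proof (cases "k = 0")
    case False
    have "factor_op k Z f = factor_op k Z (factor_op 0 Z (factor_op 0 X f))"
      using identity \<open>0 < n\<close> by simp
    also have "\<dots> = factor_op k Z (factor_op 0 Z (factor_op k X f))"
      using factor_uniformD[OF \<open>factor_uniform n X f\<close> \<open>k < n\<close>] by simp
    also have "\<dots> = factor_op 0 Z (factor_op k Z (factor_op k X f))"
      using False by (simp add: factor_op_commute)
    also have "\<dots> = factor_op 0 Z f"
      using identity \<open>k < n\<close> by simp
    finally show ?thesis .
  qed simp
qed

lemma matrix_inv_left: "invertible A \<Longrightarrow> matrix_inv A ** A = mat 1"
  unfolding invertible_def matrix_inv_def by (metis (mono_tags, lifting) someI_ex)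

theorem lemma4:
  fixes n :: nat and \<psi> :: "'d::finite list \<Rightarrow> complex" and X :: "complex^'d^'d"
  assumes "n \<ge> 2"
    and "\<psi> \<in> sym_subspace n"
    and "op_first X \<psi> \<in> sym_subspace n"
  shows "(\<forall>p::nat. op_first (mat_pow X p) \<psi> \<in> sym_subspace n)
       \<and> (invertible X \<longrightarrow> (\<forall>p::int. op_first (mat_ipow X p) \<psi> \<in> sym_subspace n))"
proof -
  have "0 < n"
    using assms(1) by simp
  note sym_iff = factor_op_in_sym_subspace_iff[OF assms(2) \<open>0 < n\<close>]
  note tensor = sym_subspace_in_tensor_space[OF assms(2)]
  have X_uniform: "factor_uniform n X \<psi>"
    using assms(3) sym_iff by (simp add: op_first_eq_factor_op)
  have "op_first (mat_pow Y p) \<psi> \<in> sym_subspace n" if "factor_uniform n Y \<psi>" for Y p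
    using factor_uniform_mat_pow[OF tensor \<open>0 < n\<close> that] sym_iff by (simp add: op_first_eq_factor_op)
  moreover have "factor_uniform n (matrix_inv X) \<psi>" if "invertible X"
    using factor_uniform_left_inverse[OF tensor \<open>0 < n\<close> matrix_inv_left[OF that] X_uniform] .
  ultimately show ?thesis
    using X_uniform by (simp add: mat_ipow_def)
qed

end
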